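(* Let $f_\omega\in\ell_1([0,\omega])$ be defined by $f_\omega(\omega)=1$ and $f_\omega(n)=0$ for $n<\omega$. Then $f_\omega\in d_{1/2}^{\omega}(B_{\ell_1([0,\omega])})$.
   Context: $[0,\omega]$ is the ordinal interval with the order topology, $\ell_1([0,\omega])$ is identified with $C([0,\omega])^*$ with the corresponding weak$^*$-topology. For $x\in C([0,\omega]),t\in\mathbb R$, $H(x,t)=\{h: h(x)>t\}$; a weak$^*$-slice of a weak$^*$-compact $K$ is a nonempty $H(x,t)\cap K$; $d_\varepsilon K$ is $K$ minus the union of all weak$^*$-slices of $K$ of norm diameter $<\varepsilon$; $d_\varepsilon^0K=K$, $d_\varepsilon^{\beta+1}K=d_\varepsilon(d_\varepsilon^\beta K)$, $d_\varepsilon^\beta K=\bigcap_{\mu<\beta}d_\varepsilon^\mu K$ for limit $\beta$. *)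

theory Defs
  imports "HOL-Analysis.Analysis"
begin

text \<open>The ordinal interval [0,omega] is modelled by the type enat (points enat n and infinity),
  carrying its order topology (instance linorder_topology from HOL-Library.Extended_Real).\<close>

definition C0w :: "(enat \<Rightarrow> real) set" where
  "C0w = {x. continuous_on UNIV x}"

definition l1w :: "(enat \<Rightarrow> real) set" where
  "l1w = {h. (\<lambda>t. norm (h t)) summable_on UNIV}"

definition l1norm :: "(enat \<Rightarrow> real) \<Rightarrow> real" where
  "l1norm h = (\<Sum>\<^sub>\<infinity>t. \<bar>h t\<bar>)"

definition pair :: "(enat \<Rightarrow> real) \<Rightarrow> (enat \<Rightarrow> real) \<Rightarrow> real" where
  "pair h x = (\<Sum>\<^sub>\<infinity>t. h t * x t)"

definition B_l1 :: "(enat \<Rightarrow> real) set" where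
  "B_l1 = {h \<in> l1w. l1norm h \<le> 1}"

definition wslice :: "(enat \<Rightarrow> real) set \<Rightarrow> (enat \<Rightarrow> real) \<Rightarrow> real \<Rightarrow> (enat \<Rightarrow> real) set" where
  "wslice K x t = {h \<in> K. pair h x > t}"

definition is_wslice :: "(enat \<Rightarrow> real) set \<Rightarrow> (enat \<Rightarrow> real) set \<Rightarrow> bool" where
  "is_wslice K S \<longleftrightarrow> (\<exists>x t. x \<in> C0w \<and> S = wslice K x t \<and> S \<noteq> {})"

definition diam_lt :: "(enat \<Rightarrow> real) set \<Rightarrow> real \<Rightarrow> bool" where
  "diam_lt S eps \<longleftrightarrow> (\<exists>\<delta> < eps. \<forall>h\<in>S. \<forall>g\<in>S. l1norm (\<lambda>t. h t - g t) \<le> \<delta>)"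

definition dset :: "real \<Rightarrow> (enat \<Rightarrow> real) set \<Rightarrow> (enat \<Rightarrow> real) set" where
  "dset eps K = K - \<Union>{S. is_wslice K S \<and> diam_lt S eps}"

fun dset_iter :: "real \<Rightarrow> nat \<Rightarrow> (enat \<Rightarrow> real) set \<Rightarrow> (enat \<Rightarrow> real) set" where
  "dset_iter eps 0 K = K"
| "dset_iter eps (Suc n) K = dset eps (dset_iter eps n K)"

definition dset_omega :: "real \<Rightarrow> (enat \<Rightarrow> real) set \<Rightarrow> (enat \<Rightarrow> real) set" where
  "dset_omega eps K = (\<Inter>n. dset_iter eps n K)"

definition f_omega :: "enat \<Rightarrow> real" where
  "f_omega t = (if t = \<infinity> then 1 else 0)"

end

theory Submission
  imports Defs
begin

(* For m, k let u(m,k) be the uniform probability on the dyadic block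
   {m, ..., m + 2^k - 1} of [0,omega).  It is the average of its two halves u(m,k-1) and
   u(m + 2^(k-1), k-1), and both halves are at l1-distance exactly 1 from it.  Since a
   weak*-functional averages over the halves, every slice containing u(m,k) contains one of
   the halves, so no slice of small diameter around u(m,k) exists; by induction on n,
   u(m,k) lies in the n-th derived set d^n_{1/2}(B) whenever n <= k.
   For f_omega: a slice H(x,t) containing it has x(omega) > t, so by continuity of x at omega
   x > t on a tail [m,omega); hence the slice also contains u(m,n+1), which is already in
   d^{n+1}_{1/2}(B) and so cannot lie in a slice of diameter < 1/2.  Thus f_omega survives
   every finite step, i.e. lies in d^omega_{1/2}(B).
   The file first proves two criteria for a point to survive one derivation step (every slice
   through it contains a far point, resp. meets the next derived set) and the summation facts
   for finitely supported vectors; then the blocks are shown to survive by the first criterion,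
   and f_omega by the second. *)

lemma in_dset_if_slices_wide:
  assumes "h \<in> K"
    and wide: "\<And>x t. x \<in> C0w \<Longrightarrow> pair h x > t \<Longrightarrow>
                 \<exists>g\<in>K. pair g x > t \<and> l1norm (\<lambda>s. h s - g s) \<ge> eps"
  shows "h \<in> dset eps K"
  unfolding dset_def
proof (intro DiffI notI)
  show "h \<in> K" by fact
next
  assume "h \<in> \<Union>{S. is_wslice K S \<and> diam_lt S eps}"
  then obtain S x t where hS: "h \<in> S" and S: "S = wslice K x t" and x: "x \<in> C0w"
    and small: "diam_lt S eps"
    unfolding is_wslice_def by blast
  obtain \<delta> where "\<delta> < eps" and diam: "\<forall>f\<in>S. \<forall>g\<in>S. l1norm (\<lambda>s. f s - g s) \<le> \<delta>"
    using small unfolding diam_lt_def by blast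
  from hS S have "pair h x > t" by (simp add: wslice_def)
  then obtain g where "g \<in> K" "pair g x > t" and far: "l1norm (\<lambda>s. h s - g s) \<ge> eps"
    using wide x by blast
  then have "g \<in> S" using S by (simp add: wslice_def)
  with hS diam far \<open>\<delta> < eps\<close> show False by force
qed

text \<open>A point h of K also survives d_eps if every weak*-slice of K containing h meets
  d_eps K: a slice containing a surviving point cannot have diameter < eps.\<close>
lemma in_dset_if_slices_meet_dset:
  assumes "h \<in> K"
    and meet: "\<And>x t. x \<in> C0w \<Longrightarrow> pair h x > t \<Longrightarrow> \<exists>g\<in>dset eps K. pair g x > t"
  shows "h \<in> dset eps K"
  unfolding dset_def
proof (intro DiffI notI)
  show "h \<in> K" by fact
next
  assume "h \<in> \<Union>{S. is_wslice K S \<and> diam_lt S eps}"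
  then obtain S x t where hS: "h \<in> S" and S: "S = wslice K x t" and x: "x \<in> C0w"
    and small: "diam_lt S eps"
    unfolding is_wslice_def by blast
  from hS S have "pair h x > t" by (simp add: wslice_def)
  then obtain g where g: "g \<in> dset eps K" "pair g x > t" using meet x by blast
  then have "g \<in> S" using S by (simp add: dset_def wslice_def)
  then have "g \<in> \<Union>{S. is_wslice K S \<and> diam_lt S eps}"
    using S x small by (auto simp: is_wslice_def)
  with g(1) show False by (simp add: dset_def)
qed

lemma infsum_finite_support:
  fixes g :: "enat \<Rightarrow> real"
  assumes "finite F" and "\<And>s. s \<notin> F \<Longrightarrow> g s = 0"
  shows "g summable_on UNIV" and "infsum g UNIV = sum g F"
proof -
  have "{s\<in>UNIV. g s \<noteq> 0} \<subseteq> F" using assms(2) by blast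
  then show "g summable_on UNIV"
    by (intro finite_nonzero_values_imp_summable_on finite_subset[OF _ assms(1)])
  have "infsum g UNIV = infsum g F"
    by (rule infsum_cong_neutral) (use assms(2) in auto)
  then show "infsum g UNIV = sum g F" using assms(1) by simp
qed

lemma f_omega_in_ball: "f_omega \<in> B_l1"
proof -
  have "(\<lambda>s. norm (f_omega s)) summable_on UNIV"
    by (rule infsum_finite_support(1)[of "{\<infinity>}"]) (simp_all add: f_omega_def)
  moreover have "l1norm f_omega = 1"
    unfolding l1norm_def
    by (subst infsum_finite_support(2)[of "{\<infinity>}"]) (simp_all add: f_omega_def)
  ultimately show ?thesis by (simp add: B_l1_def l1w_def)
qed

lemma pair_f_omega: "pair f_omega x = x \<infinity>"
  unfolding pair_def
  by (subst infsum_finite_support(2)[of "{\<infinity>}"]) (auto simp: f_omega_def)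

abbreviation block_support :: "nat \<Rightarrow> nat \<Rightarrow> enat set" where
  "block_support m k \<equiv> enat ` {m..<m+2^k}"

definition block :: "nat \<Rightarrow> nat \<Rightarrow> enat \<Rightarrow> real" where
  "block m k s = (if s \<in> block_support m k then 1/2^k else 0)"

lemma block_enat [simp]: "block m k (enat i) = (if m \<le> i \<and> i < m + 2^k then 1/2^k else 0)"
  by (auto simp: block_def)

lemma block_off_support: "s \<notin> block_support m k \<Longrightarrow> block m k s = 0"
  by (simp add: block_def)

lemma sum_block_support:
  "sum g (block_support m k) = (\<Sum>j\<in>{m..<m+2^k}. g (enat j))"
  by (simp add: sum.reindex inj_on_def)

lemma block_in_ball: "block m k \<in> B_l1"
proof -
  have "(\<lambda>s. norm (block m k s)) summable_on UNIV"
    by (rule infsum_finite_support(1)[of "block_support m k"]) (simp_all add: block_off_support)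
  moreover have "l1norm (block m k) = (\<Sum>j\<in>{m..<m+2^k}. 1/2^k)"
    unfolding l1norm_def
    by (subst infsum_finite_support(2)[of "block_support m k"])
       (auto simp: block_off_support sum_block_support intro: sum.cong)
  ultimately show ?thesis by (simp add: B_l1_def l1w_def)
qed

lemma pair_block: "pair (block m k) x = (\<Sum>j\<in>{m..<m+2^k}. x (enat j)) / 2^k"
proof -
  have "pair (block m k) x = (\<Sum>j\<in>{m..<m+2^k}. x (enat j) / 2^k)"
    unfolding pair_def
    by (subst infsum_finite_support(2)[of "block_support m k"])
       (auto simp: block_off_support sum_block_support intro: sum.cong)
  then show ?thesis by (simp add: sum_divide_distrib)
qed

lemma block_half_distance:
  assumes "a = m \<or> a = m + 2^k"
  shows "l1norm (\<lambda>s. block m (Suc k) s - block a k s) = 1"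
proof -
  have supp: "block a k s = 0" if "s \<notin> block_support m (Suc k)" for s
    using assms that by (cases s) (auto simp: block_def)
  have "l1norm (\<lambda>s. block m (Suc k) s - block a k s)
        = (\<Sum>s\<in>block_support m (Suc k). \<bar>block m (Suc k) s - block a k s\<bar>)"
    unfolding l1norm_def
    by (rule infsum_finite_support(2)) (simp_all add: block_off_support supp)
  also have "\<dots> = (\<Sum>j\<in>{m..<m+2^Suc k}. \<bar>block m (Suc k) (enat j) - block a k (enat j)\<bar>)"
    by (rule sum_block_support)
  also have "\<dots> = (\<Sum>j\<in>{m..<m+2^Suc k}. 1/2^Suc k)"
    by (rule sum.cong) (use assms in auto)
  finally show ?thesis by simp
qed

text \<open>Since the average over a block is the mean of the averages over its halves, one of
  the halves has average at least as large.\<close>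
lemma block_average_split:
  assumes "pair (block m (Suc k)) x > t"
  shows "pair (block m k) x > t \<or> pair (block (m+2^k) k) x > t"
proof -
  have "(\<Sum>j\<in>{m..<m+2^Suc k}. x (enat j))
        = (\<Sum>j\<in>{m..<m+2^k}. x (enat j)) + (\<Sum>j\<in>{m+2^k..<m+2^k+2^k}. x (enat j))"
    by (subst sum.atLeastLessThan_concat[symmetric, of m "m+2^k"]) (auto simp: add.assoc mult_2)
  then show ?thesis using assms by (auto simp: pair_block field_simps)
qed

lemma block_in_dset_iter: "n \<le> k \<Longrightarrow> block m k \<in> dset_iter (1/2) n B_l1"
proof (induction n arbitrary: m k)
  case 0
  then show ?case using block_in_ball by simp
next
  case (Suc n)
  then obtain k' where k: "k = Suc k'" and "n \<le> k'" by (cases k) auto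
  let ?K = "dset_iter (1/2) n B_l1"
  have halves: "block m k' \<in> ?K" "block (m+2^k') k' \<in> ?K"
    using Suc.IH \<open>n \<le> k'\<close> by auto
  have "block m (Suc k') \<in> dset (1/2) ?K"
  proof (rule in_dset_if_slices_wide)
    show "block m (Suc k') \<in> ?K" using Suc.IH[of k m] Suc.prems k by simp
  next
    fix x t assume "pair (block m (Suc k')) x > t"
    then obtain a where "a = m \<or> a = m + 2^k'" and "pair (block a k') x > t"
      using block_average_split by blast
    moreover from this have "block a k' \<in> ?K" using halves by blast
    moreover have "l1norm (\<lambda>s. block m (Suc k') s - block a k' s) = 1"
      using \<open>a = m \<or> a = m + 2^k'\<close> by (rule block_half_distance)
    ultimately show "\<exists>g\<in>?K. pair g x > t \<and> l1norm (\<lambda>s. block m (Suc k') s - g s) \<ge> 1/2"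
      by auto
  qed
  then show ?case using k by simp
qed

lemma continuous_tail_above:
  assumes "x \<in> C0w" and "x \<infinity> > t"
  shows "\<exists>m. \<forall>j\<ge>m. x (enat j) > t"
proof -
  have "((\<lambda>j. enat j) \<longlongrightarrow> \<infinity>) sequentially"
  proof (rule order_tendstoI)
    fix a :: enat assume "a < \<infinity>"
    then obtain b where "a = enat b" by (cases a) auto
    then show "\<forall>\<^sub>F j in sequentially. a < enat j"
      using eventually_gt_at_top[of b] by (auto elim: eventually_mono)
  qed simp
  then have "((\<lambda>j. x (enat j)) \<longlongrightarrow> x \<infinity>) sequentially"
    using assms(1) continuous_on_tendsto_compose[of UNIV x] by (simp add: C0w_def)
  then have "\<forall>\<^sub>F j in sequentially. x (enat j) > t" using assms(2) by (rule order_tendstoD)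
  then show ?thesis by (simp add: eventually_sequentially)
qed

text \<open>Every slice H(x,t) through f_omega contains a block lying in the tail where x > t,
  and that block survives one step further than the current derived set.\<close>
lemma f_omega_in_dset_iter: "f_omega \<in> dset_iter (1/2) n B_l1"
proof (induction n)
  case 0
  then show ?case using f_omega_in_ball by simp
next
  case (Suc n)
  let ?K = "dset_iter (1/2) n B_l1"
  have "f_omega \<in> dset (1/2) ?K"
  proof (rule in_dset_if_slices_meet_dset)
    show "f_omega \<in> ?K" by (fact Suc.IH)
  next
    fix x t assume x: "x \<in> C0w" and "pair f_omega x > t"
    then have "x \<infinity> > t" by (simp add: pair_f_omega)
    then obtain m where tail: "\<forall>j\<ge>m. x (enat j) > t"
      using continuous_tail_above[OF x] by blast
    have "(\<Sum>j\<in>{m..<m+2^Suc n}. t) < (\<Sum>j\<in>{m..<m+2^Suc n}. x (enat j))"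
      by (rule sum_strict_mono) (use tail in auto)
    then have "pair (block m (Suc n)) x > t" by (simp add: pair_block field_simps)
    moreover have "block m (Suc n) \<in> dset (1/2) ?K"
      using block_in_dset_iter[of "Suc n" "Suc n" m] by simp
    ultimately show "\<exists>g\<in>dset (1/2) ?K. pair g x > t" by blast
  qed
  then show ?case by simp
qed

theorem mainTheorem8:
  shows "f_omega \<in> dset_omega (1/2) B_l1"
  unfolding dset_omega_def using f_omega_in_dset_iter by blast

end
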